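(* Let $q$ be a prime power. Any classical (possibly randomized) algorithm that solves the hidden linear structure problem over $\mathit{GF}(q)$ with error probability at most $\tfrac12$ must make $\Omega(\sqrt q)$ queries to the black box.
   Context: The (classical) hidden linear structure problem over $\mathit{GF}(q)$: one is given a black box computing the map $\mathit{GF}(q)\times\mathit{GF}(q)\to\mathit{GF}(q)\times\mathit{GF}(q)$, $(x,y)\mapsto(x,\pi(y+sx))$, where $\pi$ is an arbitrary (unknown) permutation of $\mathit{GF}(q)$ and $s\in\mathit{GF}(q)$ is unknown. The goal is to determine $s$. Complexity is measured by the number of queries to the black box. *)

theory Defs
  imports "HOL-Algebra.Ring" "HOL-Probability.Probability_Mass_Function"
begin

text \<open>The black box of the hidden linear structure problem over the finite field R with
  hidden slope s and hidden permutation \<pi> of the carrier: (x,y) maps to (x, \<pi> (y + s x)).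
  The first component x of the answer is the query itself, so only the second one is returned.
  Queries outside the field carrier are answered by a fixed constant (no information).\<close>
definition hls_box :: "nat ring \<Rightarrow> nat \<Rightarrow> (nat \<Rightarrow> nat) \<Rightarrow> nat \<times> nat \<Rightarrow> nat" where
  "hls_box R s \<pi> q =
     (if fst q \<in> carrier R \<and> snd q \<in> carrier R
      then \<pi> (snd q \<oplus>\<^bsub>R\<^esub> (s \<otimes>\<^bsub>R\<^esub> fst q)) else 0)"

text \<open>A deterministic adaptive query algorithm: the next query is a function of the list of
  answers obtained so far; the output is a function of the list of all answers.\<close>
type_synonym det_alg = "(nat list \<Rightarrow> nat \<times> nat) \<times> (nat list \<Rightarrow> nat)"

fun hls_answers :: "(nat \<times> nat \<Rightarrow> nat) \<Rightarrow> det_alg \<Rightarrow> nat \<Rightarrow> nat list" where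
  "hls_answers orc D 0 = []"
| "hls_answers orc D (Suc k) =
     hls_answers orc D k @ [orc (fst D (hls_answers orc D k))]"

definition hls_run :: "(nat \<times> nat \<Rightarrow> nat) \<Rightarrow> nat \<Rightarrow> det_alg \<Rightarrow> nat" where
  "hls_run orc T D = snd D (hls_answers orc D T)"

text \<open>A randomized algorithm is a probability distribution over deterministic algorithms.\<close>
definition hls_solves :: "nat ring \<Rightarrow> nat \<Rightarrow> det_alg pmf \<Rightarrow> bool" where
  "hls_solves R T A \<longleftrightarrow>
     (\<forall>s \<in> carrier R. \<forall>\<pi>. bij_betw \<pi> (carrier R) (carrier R) \<longrightarrow>
        measure_pmf.prob A {D. hls_run (hls_box R s \<pi>) T D \<noteq> s} \<le> 1/2)"

end

theory Submission
  imports Defs "HOL-Combinatorics.Permutations"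
begin

(* A deterministic algorithm D sees only its transcript of answers. Call a run (s, pi)
   collision-free if the queried field points have pairwise distinct values y + s x. If the
   queried points are collision-free for two slopes s and s', relabelling pi by a permutation
   theta with theta (y + s' x) = y + s x on these points turns (s, pi) into (s', pi o theta)
   without changing the transcript. A fixed set of k points is not collision-free for at most
   k^2 slopes, so each run that is correct and collision-free after T queries yields q - T^2
   runs with the same transcript, from which s can be read off; hence there are at most
   q! q / (q - T^2) such runs. A run whose first collision happens at query k reveals s
   through the two colliding points, at the cost of a factor k for the index of the earlier
   one. So D is correct on at most a fraction (1 + T^2) / (q - T^2) of all inputs (s, pi),
   and by averaging over the random choice of D, success probability 1/2 forces
   q <= 2 + 3 T^2. *)

definition hls_shear :: "('a, 'b) ring_scheme \<Rightarrow> 'a \<Rightarrow> 'a \<times> 'a \<Rightarrow> 'a" where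
  "hls_shear R s p = snd p \<oplus>\<^bsub>R\<^esub> s \<otimes>\<^bsub>R\<^esub> fst p"

lemma length_hls_answers [simp]: "length (hls_answers orc D k) = k"
  by (induction k) auto

lemma take_hls_answers [simp]:
  "j \<le> k \<Longrightarrow> take j (hls_answers orc D k) = hls_answers orc D j"
proof (induction k)
  case (Suc k)
  then show ?case by (cases "j = Suc k") auto
qed simp

lemma hls_answers_cong:
  assumes "\<And>j. j < k \<Longrightarrow> orc' (fst D (hls_answers orc D j)) = orc (fst D (hls_answers orc D j))"
  shows "hls_answers orc' D k = hls_answers orc D k"
  using assms by (induction k) auto

definition hls_queries :: "det_alg \<Rightarrow> nat list \<Rightarrow> (nat \<times> nat) set" where
  "hls_queries D t = (\<lambda>j. fst D (take j t)) ` {..<length t}"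

definition hls_field_queries :: "nat ring \<Rightarrow> det_alg \<Rightarrow> nat list \<Rightarrow> (nat \<times> nat) set" where
  "hls_field_queries R D t = hls_queries D t \<inter> carrier R \<times> carrier R"

lemma hls_queries_answers:
  "hls_queries D (hls_answers orc D k) = (\<lambda>j. fst D (hls_answers orc D j)) ` {..<k}"
  unfolding hls_queries_def by (intro image_cong) auto

lemma finite_hls_field_queries: "finite (hls_field_queries R D t)"
  by (simp add: hls_field_queries_def hls_queries_def)

lemma card_hls_field_queries_le: "card (hls_field_queries R D t) \<le> length t"
proof -
  have "card (hls_field_queries R D t) \<le> card (hls_queries D t)"
    unfolding hls_field_queries_def by (rule card_mono) (simp_all add: hls_queries_def)
  also have "\<dots> \<le> length t"
    unfolding hls_queries_def using card_image_le[of "{..<length t}"] by simp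
  finally show ?thesis .
qed

definition hls_collision_free :: "nat ring \<Rightarrow> det_alg \<Rightarrow> nat \<Rightarrow> nat list \<Rightarrow> bool" where
  "hls_collision_free R D s t \<longleftrightarrow> inj_on (hls_shear R s) (hls_field_queries R D t)"

lemma hls_collision_free_Nil [simp]: "hls_collision_free R D s []"
  by (simp add: hls_collision_free_def hls_field_queries_def hls_queries_def)

lemma hls_first_collision:
  assumes "hls_collision_free R D s (hls_answers orc D k)"
    and "\<not> hls_collision_free R D s (hls_answers orc D (Suc k))"
  obtains i where "i < k"
    and "fst D (hls_answers orc D i) \<in> carrier R \<times> carrier R"
    and "fst D (hls_answers orc D k) \<in> carrier R \<times> carrier R"
    and "fst D (hls_answers orc D i) \<noteq> fst D (hls_answers orc D k)"
    and "hls_shear R s (fst D (hls_answers orc D i)) = hls_shear R s (fst D (hls_answers orc D k))"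
proof -
  define p where "p = fst D (hls_answers orc D k)"
  define old where "old = hls_field_queries R D (hls_answers orc D k)"
  have new: "hls_field_queries R D (hls_answers orc D (Suc k)) = old \<union> ({p} \<inter> carrier R \<times> carrier R)"
    unfolding hls_field_queries_def hls_queries_answers old_def p_def by (auto simp: lessThan_Suc)
  have p: "p \<in> carrier R \<times> carrier R"
  proof (rule ccontr)
    assume "p \<notin> carrier R \<times> carrier R"
    then have "hls_field_queries R D (hls_answers orc D (Suc k)) = old"
      using new by auto
    with assms show False
      unfolding old_def hls_collision_free_def by metis
  qed
  with assms new have "hls_shear R s p \<in> hls_shear R s ` (old - {p})"
    unfolding old_def by (auto simp: hls_collision_free_def)
  then obtain x where x: "x \<in> old - {p}" "hls_shear R s x = hls_shear R s p"
    by (metis imageE)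
  then obtain i where "i < k" "x = fst D (hls_answers orc D i)"
    unfolding old_def hls_field_queries_def hls_queries_answers by auto
  with x p show thesis
    using that unfolding old_def hls_field_queries_def p_def by auto
qed

lemma (in cring) hls_shear_collision_slope:
  assumes "p \<in> carrier R \<times> carrier R" "p' \<in> carrier R \<times> carrier R" "s \<in> carrier R"
    and "hls_shear R s p = hls_shear R s p'"
  shows "s \<otimes> (fst p \<ominus> fst p') = snd p' \<ominus> snd p"
proof -
  have "s \<otimes> (fst p \<ominus> fst p') = hls_shear R s p \<ominus> hls_shear R s p' \<oplus> (snd p' \<ominus> snd p)"
    using assms(1-3) unfolding hls_shear_def mem_Times_iff by algebra
  also have "\<dots> = snd p' \<ominus> snd p"
    using assms unfolding hls_shear_def mem_Times_iff by algebra
  finally show ?thesis .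
qed

lemma (in domain) hls_shear_collision_unique:
  assumes p: "p \<in> carrier R \<times> carrier R" "p' \<in> carrier R \<times> carrier R" "p \<noteq> p'"
    and s1: "s1 \<in> carrier R" "hls_shear R s1 p = hls_shear R s1 p'"
    and s2: "s2 \<in> carrier R" "hls_shear R s2 p = hls_shear R s2 p'"
  shows "s1 = s2"
proof -
  have minus_eq_zero: "a \<ominus> b = \<zero> \<longleftrightarrow> a = b" if "a \<in> carrier R" "b \<in> carrier R" for a b
    using that by (simp add: add.inv_solve_right' minus_eq)
  have slope1: "s1 \<otimes> (fst p \<ominus> fst p') = snd p' \<ominus> snd p"
    using hls_shear_collision_slope p(1,2) s1 by blast
  have slope2: "s2 \<otimes> (fst p \<ominus> fst p') = snd p' \<ominus> snd p"
    using hls_shear_collision_slope p(1,2) s2 by blast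
  define d where "d = fst p \<ominus> fst p'"
  have d: "d \<in> carrier R" "d \<noteq> \<zero>"
  proof -
    show "d \<in> carrier R" using p unfolding d_def by auto
    show "d \<noteq> \<zero>"
    proof
      assume "d = \<zero>"
      with p have "fst p = fst p'"
        using minus_eq_zero[of "fst p" "fst p'"] unfolding d_def by auto
      moreover from \<open>d = \<zero>\<close> slope1 s1 have "snd p' \<ominus> snd p = \<zero>"
        unfolding d_def by simp
      with p have "snd p = snd p'"
        using minus_eq_zero[of "snd p'" "snd p"] by auto
      ultimately show False
        using p(3) by (simp add: prod_eq_iff)
    qed
  qed
  show "s1 = s2"
    using m_rcancel[OF d(2) d(1) s1(1) s2(1)] slope1 slope2 unfolding d_def by simp
qed

definition hls_slope_through :: "('a, 'b) ring_scheme \<Rightarrow> 'a \<times> 'a \<Rightarrow> 'a \<times> 'a \<Rightarrow> 'a" where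
  "hls_slope_through R p p' = (SOME s. s \<in> carrier R \<and> hls_shear R s p = hls_shear R s p')"

lemma (in domain) hls_slope_through_eq:
  assumes "p \<in> carrier R \<times> carrier R" "p' \<in> carrier R \<times> carrier R" "p \<noteq> p'"
    and "s \<in> carrier R" "hls_shear R s p = hls_shear R s p'"
  shows "hls_slope_through R p p' = s"
proof -
  have "hls_slope_through R p p' \<in> carrier R \<and>
      hls_shear R (hls_slope_through R p p') p = hls_shear R (hls_slope_through R p p') p'"
    unfolding hls_slope_through_def by (rule someI[of _ s]) (use assms in simp)
  with assms show ?thesis
    using hls_shear_collision_unique by blast
qed

lemma (in domain) card_non_injective_slopes:
  assumes "finite X" "X \<subseteq> carrier R \<times> carrier R"
  shows "card {s \<in> carrier R. \<not> inj_on (hls_shear R s) X} \<le> card X ^ 2"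
proof -
  let ?slope = "\<lambda>(p, p'). hls_slope_through R p p'"
  have "{s \<in> carrier R. \<not> inj_on (hls_shear R s) X} \<subseteq> ?slope ` (X \<times> X)"
  proof
    fix s assume "s \<in> {s \<in> carrier R. \<not> inj_on (hls_shear R s) X}"
    then obtain p p' where "s \<in> carrier R" "p \<in> X" "p' \<in> X" "p \<noteq> p'"
      "hls_shear R s p = hls_shear R s p'"
      unfolding inj_on_def by blast
    with assms(2) have "hls_slope_through R p p' = s"
      using hls_slope_through_eq by blast
    with \<open>p \<in> X\<close> \<open>p' \<in> X\<close> show "s \<in> ?slope ` (X \<times> X)"
      by (intro image_eqI[where x = "(p, p')"]) auto
  qed
  then have "card {s \<in> carrier R. \<not> inj_on (hls_shear R s) X} \<le> card (?slope ` (X \<times> X))"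
    using assms(1) by (intro card_mono) auto
  also have "\<dots> \<le> card (X \<times> X)"
    by (rule card_image_le) (use assms(1) in simp)
  also have "\<dots> = card X ^ 2"
    by (simp add: card_cartesian_product power2_eq_square)
  finally show ?thesis .
qed

lemma card_collision_free_slopes:
  assumes "domain R" "finite (carrier R)"
  shows "card (carrier R) - length t ^ 2 \<le> card {s \<in> carrier R. hls_collision_free R D s t}"
proof -
  have "card {s \<in> carrier R. \<not> hls_collision_free R D s t} \<le> card (hls_field_queries R D t) ^ 2"
    using domain.card_non_injective_slopes[OF assms(1) finite_hls_field_queries]
    unfolding hls_collision_free_def hls_field_queries_def by blast
  also have "\<dots> \<le> length t ^ 2"
    by (rule power_mono[OF card_hls_field_queries_le]) simp
  finally have "card (carrier R) - length t ^ 2 \<le>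
      card (carrier R) - card {s \<in> carrier R. \<not> hls_collision_free R D s t}"
    by (rule diff_le_mono2)
  also have "\<dots> = card (carrier R - {s \<in> carrier R. \<not> hls_collision_free R D s t})"
    using assms(2) by (intro card_Diff_subset[symmetric]) auto
  also have "carrier R - {s \<in> carrier R. \<not> hls_collision_free R D s t} =
      {s \<in> carrier R. hls_collision_free R D s t}"
    by blast
  finally show ?thesis .
qed

lemma obtain_permutes_extension:
  assumes "finite Q" "inj_on f X" "inj_on g X" "f ` X \<subseteq> Q" "g ` X \<subseteq> Q"
  obtains \<theta> where "\<theta> permutes Q" "\<And>x. x \<in> X \<Longrightarrow> \<theta> (g x) = f x"
proof -
  define h where "h = f \<circ> inv_into X g"
  have h: "bij_betw h (g ` X) (f ` X)"
    unfolding h_def using assms(2,3)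
    by (intro bij_betw_trans[OF bij_betw_inv_into] inj_on_imp_bij_betw)
  have fin: "finite (g ` X)" "finite (f ` X)"
    using finite_subset[OF assms(5) assms(1)] finite_subset[OF assms(4) assms(1)] .
  have "card (Q - g ` X) = card (Q - f ` X)"
    using assms(2,3) by (simp add: card_Diff_subset[OF fin(1) assms(5)]
        card_Diff_subset[OF fin(2) assms(4)] card_image)
  then obtain k where k: "bij_betw k (Q - g ` X) (Q - f ` X)"
    using finite_same_card_bij[OF finite_Diff[OF assms(1)] finite_Diff[OF assms(1)]] by blast
  define \<theta> where "\<theta> z = (if z \<in> g ` X then h z else if z \<in> Q then k z else z)" for z
  have "bij_betw (\<lambda>z. if z \<in> g ` X then h z else k z) (g ` X \<union> (Q - g ` X)) (f ` X \<union> (Q - f ` X))"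
    by (rule bij_betw_disjoint_Un[OF h k]) auto
  moreover have "g ` X \<union> (Q - g ` X) = Q" "f ` X \<union> (Q - f ` X) = Q"
    using assms(4,5) by blast+
  moreover have "bij_betw \<theta> Q Q \<longleftrightarrow> bij_betw (\<lambda>z. if z \<in> g ` X then h z else k z) Q Q"
    by (rule bij_betw_cong) (simp add: \<theta>_def)
  ultimately have "bij_betw \<theta> Q Q"
    by simp
  then have "\<theta> permutes Q"
    by (rule bij_imp_permutes) (use assms(5) in \<open>auto simp: \<theta>_def\<close>)
  moreover have "\<theta> (g x) = f x" if "x \<in> X" for x
    using that assms(3) by (simp add: \<theta>_def h_def)
  ultimately show thesis
    using that by blast
qed

definition hls_relabel :: "nat ring \<Rightarrow> det_alg \<Rightarrow> nat \<Rightarrow> nat \<Rightarrow> nat list \<Rightarrow> nat \<Rightarrow> nat" where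
  "hls_relabel R D s s' t = (SOME \<theta>. \<theta> permutes carrier R \<and>
     (\<forall>p \<in> hls_field_queries R D t. \<theta> (hls_shear R s' p) = hls_shear R s p))"

lemma hls_relabel:
  assumes "ring R" "finite (carrier R)" "s \<in> carrier R" "s' \<in> carrier R"
    and "hls_collision_free R D s t" "hls_collision_free R D s' t"
  shows "hls_relabel R D s s' t permutes carrier R"
    and "\<And>p. p \<in> hls_field_queries R D t \<Longrightarrow>
      hls_relabel R D s s' t (hls_shear R s' p) = hls_shear R s p"
proof -
  interpret ring R by fact
  have closed: "hls_shear R \<sigma> ` hls_field_queries R D t \<subseteq> carrier R" if "\<sigma> \<in> carrier R" for \<sigma>
    using that unfolding hls_shear_def hls_field_queries_def by auto
  obtain \<theta> where "\<theta> permutes carrier R"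
    "\<And>p. p \<in> hls_field_queries R D t \<Longrightarrow> \<theta> (hls_shear R s' p) = hls_shear R s p"
    by (rule obtain_permutes_extension[OF assms(2) assms(5,6)[unfolded hls_collision_free_def]
          closed[OF assms(3)] closed[OF assms(4)]]) blast
  then have "\<exists>\<theta>. \<theta> permutes carrier R \<and>
      (\<forall>p \<in> hls_field_queries R D t. \<theta> (hls_shear R s' p) = hls_shear R s p)"
    by blast
  from someI_ex[OF this] show "hls_relabel R D s s' t permutes carrier R"
    and "\<And>p. p \<in> hls_field_queries R D t \<Longrightarrow>
      hls_relabel R D s s' t (hls_shear R s' p) = hls_shear R s p"
    unfolding hls_relabel_def by blast+
qed

lemma hls_answers_relabel:
  assumes "ring R" "finite (carrier R)" "s \<in> carrier R" "s' \<in> carrier R"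
    and "hls_collision_free R D s t" "hls_collision_free R D s' t"
    and t: "t = hls_answers (hls_box R s \<pi>) D k"
  shows "hls_answers (hls_box R s' (\<pi> \<circ> hls_relabel R D s s' t)) D k = t"
proof -
  have "hls_answers (hls_box R s' (\<pi> \<circ> hls_relabel R D s s' t)) D k = hls_answers (hls_box R s \<pi>) D k"
  proof (rule hls_answers_cong)
    fix j assume "j < k"
    define p where "p = fst D (hls_answers (hls_box R s \<pi>) D j)"
    have "p \<in> hls_queries D t"
      using \<open>j < k\<close> unfolding t hls_queries_answers p_def by blast
    show "hls_box R s' (\<pi> \<circ> hls_relabel R D s s' t) p = hls_box R s \<pi> p"
    proof (cases "p \<in> carrier R \<times> carrier R")
      case True
      with \<open>p \<in> hls_queries D t\<close> have "p \<in> hls_field_queries R D t"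
        unfolding hls_field_queries_def by blast
      then have "hls_relabel R D s s' t (hls_shear R s' p) = hls_shear R s p"
        by (rule hls_relabel(2)[OF assms(1-6)])
      with True show ?thesis
        by (simp add: hls_box_def hls_shear_def mem_Times_iff)
    next
      case False
      then have "\<not> (fst p \<in> carrier R \<and> snd p \<in> carrier R)"
        by (simp add: mem_Times_iff)
      then show ?thesis
        by (simp only: hls_box_def if_False)
    qed
  qed
  with t show ?thesis by simp
qed

lemma card_Sigma_collision_free_slopes:
  assumes "domain R" "finite (carrier R)" "finite X"
  shows "card X * (card (carrier R) - k^2) \<le>
    card (SIGMA x:X. {s \<in> carrier R. hls_collision_free R D s (hls_answers (orc x) D k)})"
proof -
  have "card X * (card (carrier R) - k^2) = (\<Sum>x\<in>X. card (carrier R) - k^2)"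
    by simp
  also have "\<dots> \<le> (\<Sum>x\<in>X. card {s \<in> carrier R. hls_collision_free R D s (hls_answers (orc x) D k)})"
    using card_collision_free_slopes[OF assms(1,2)] by (intro sum_mono) (metis length_hls_answers)
  also have "\<dots> = card (SIGMA x:X. {s \<in> carrier R. hls_collision_free R D s (hls_answers (orc x) D k)})"
    using assms(2,3) by (intro card_SigmaI[symmetric]) auto
  finally show ?thesis .
qed

(* The injection ((s, pi), s') |-> ((s', pi o theta), i): its value determines the transcript,
   which together with the hint i determines s, and then theta and pi. *)
lemma card_decodable_runs:
  fixes R :: "nat ring" and decode :: "nat list \<Rightarrow> nat \<Rightarrow> nat"
  assumes "domain R" "finite (carrier R)"
    and X: "X \<subseteq> carrier R \<times> {\<pi>. \<pi> permutes carrier R}"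
    and collision_free: "\<And>s \<pi>. (s, \<pi>) \<in> X \<Longrightarrow>
      hls_collision_free R D s (hls_answers (hls_box R s \<pi>) D k)"
    and decodable: "\<And>s \<pi>. (s, \<pi>) \<in> X \<Longrightarrow>
      \<exists>i<m. decode (hls_answers (hls_box R s \<pi>) D k) i = s"
  shows "card X * (card (carrier R) - k^2) \<le> card (carrier R) * card {\<pi>. \<pi> permutes carrier R} * m"
proof -
  interpret domain R by fact
  define Q where "Q = carrier R"
  define P where "P = {\<pi>. \<pi> permutes Q}"
  define ans where "ans x = hls_answers (hls_box R (fst x) (snd x)) D k" for x
  define Y where "Y = (SIGMA x:X. {s' \<in> Q. hls_collision_free R D s' (ans x)})"
  define hint where "hint x = (SOME i. i < m \<and> decode (ans x) i = fst x)" for x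
  define \<theta> where "\<theta> x s' = hls_relabel R D (fst x) s' (ans x)" for x s'
  define \<Phi> where "\<Phi> y = ((snd y, snd (fst y) \<circ> \<theta> (fst y) (snd y)), hint (fst y))" for y
  have finQP: "finite (Q \<times> P)"
    using assms(2) by (simp add: Q_def P_def finite_permutations)
  have hint: "hint x < m" "decode (ans x) (hint x) = fst x" if "x \<in> X" for x
    using someI_ex[OF decodable[of "fst x" "snd x"]] that unfolding hint_def ans_def by auto
  have \<theta>: "\<theta> x s' permutes Q" "hls_answers (hls_box R s' (snd x \<circ> \<theta> x s')) D k = ans x"
    if "(x, s') \<in> Y" for x s'
  proof -
    have facts: "fst x \<in> carrier R" "s' \<in> carrier R"
      "hls_collision_free R D (fst x) (ans x)" "hls_collision_free R D s' (ans x)"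
      using that X collision_free[of "fst x" "snd x"] unfolding Y_def Q_def ans_def by auto
    show "\<theta> x s' permutes Q"
      unfolding \<theta>_def Q_def by (rule hls_relabel(1)[OF ring_axioms assms(2) facts])
    show "hls_answers (hls_box R s' (snd x \<circ> \<theta> x s')) D k = ans x"
      using hls_answers_relabel[OF ring_axioms assms(2) facts[unfolded ans_def] refl]
      unfolding \<theta>_def ans_def .
  qed
  have "inj_on \<Phi> Y"
  proof (rule inj_onI)
    fix y1 y2 assume y: "y1 \<in> Y" "y2 \<in> Y" and "\<Phi> y1 = \<Phi> y2"
    then have s': "snd y1 = snd y2" and hint_eq: "hint (fst y1) = hint (fst y2)"
      and \<pi>: "snd (fst y1) \<circ> \<theta> (fst y1) (snd y1) = snd (fst y2) \<circ> \<theta> (fst y2) (snd y2)"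
      unfolding \<Phi>_def by auto
    have X: "fst y1 \<in> X" "fst y2 \<in> X"
      using y unfolding Y_def by auto
    have "ans (fst y1) = hls_answers (hls_box R (snd y1) (snd (fst y1) \<circ> \<theta> (fst y1) (snd y1))) D k"
      using \<theta>(2)[of "fst y1" "snd y1"] y(1) by simp
    also have "\<dots> = hls_answers (hls_box R (snd y2) (snd (fst y2) \<circ> \<theta> (fst y2) (snd y2))) D k"
      using s' \<pi> by simp
    also have "\<dots> = ans (fst y2)"
      using \<theta>(2)[of "fst y2" "snd y2"] y(2) by simp
    finally have ans_eq: "ans (fst y1) = ans (fst y2)" .
    then have s: "fst (fst y1) = fst (fst y2)"
      using hint(2)[OF X(1)] hint(2)[OF X(2)] hint_eq by simp
    with ans_eq s' have \<theta>_eq: "\<theta> (fst y1) (snd y1) = \<theta> (fst y2) (snd y2)"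
      by (simp add: \<theta>_def)
    have "surj (\<theta> (fst y1) (snd y1))"
      using permutes_surj[of "\<theta> (fst y1) (snd y1)" Q] \<theta>(1)[of "fst y1" "snd y1"] y(1) by simp
    then have "snd (fst y1) = snd (fst y2)"
      using \<pi> \<theta>_eq by (intro surj_fun_eq[of "\<theta> (fst y1) (snd y1)" UNIV]) simp_all
    with s s' show "y1 = y2"
      by (simp add: prod_eq_iff)
  qed
  moreover have "\<Phi> ` Y \<subseteq> (Q \<times> P) \<times> {..<m}"
  proof (rule image_subsetI)
    fix y assume "y \<in> Y"
    then have y: "fst y \<in> X" "snd y \<in> Q" "\<theta> (fst y) (snd y) permutes Q"
      using \<theta>(1)[of "fst y" "snd y"] unfolding Y_def by auto
    with X have "snd (fst y) permutes Q"
      unfolding Q_def by auto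
    with y show "\<Phi> y \<in> (Q \<times> P) \<times> {..<m}"
      using hint(1) unfolding \<Phi>_def P_def by (simp add: permutes_compose)
  qed
  ultimately have "card Y \<le> card ((Q \<times> P) \<times> {..<m})"
    using finQP by (intro card_inj_on_le) auto
  moreover have "card X * (card Q - k^2) \<le> card Y"
    unfolding Y_def ans_def Q_def
    using card_Sigma_collision_free_slopes[OF assms(1,2) finite_subset[OF X finQP[unfolded Q_def P_def]]] .
  ultimately show ?thesis
    by (simp add: Q_def P_def card_cartesian_product mult.commute)
qed

lemma card_correct_collision_free_runs:
  fixes R :: "nat ring"
  assumes "domain R" "finite (carrier R)"
  shows "card {(s, \<pi>) \<in> carrier R \<times> {\<pi>. \<pi> permutes carrier R}. hls_run (hls_box R s \<pi>) T D = s \<and>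
      hls_collision_free R D s (hls_answers (hls_box R s \<pi>) D T)} * (card (carrier R) - T^2)
    \<le> card (carrier R) * card {\<pi>. \<pi> permutes carrier R}"
proof -
  have "card {(s, \<pi>) \<in> carrier R \<times> {\<pi>. \<pi> permutes carrier R}. hls_run (hls_box R s \<pi>) T D = s \<and>
      hls_collision_free R D s (hls_answers (hls_box R s \<pi>) D T)} * (card (carrier R) - T^2)
    \<le> card (carrier R) * card {\<pi>. \<pi> permutes carrier R} * 1"
    by (rule card_decodable_runs[OF assms, where D = D and decode = "\<lambda>t _. snd D t"])
      (auto simp: hls_run_def)
  then show ?thesis
    by simp
qed

lemma card_first_collision_runs:
  fixes R :: "nat ring"
  assumes "domain R" "finite (carrier R)"
  shows "card {(s, \<pi>) \<in> carrier R \<times> {\<pi>. \<pi> permutes carrier R}.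
      hls_collision_free R D s (hls_answers (hls_box R s \<pi>) D k) \<and>
      \<not> hls_collision_free R D s (hls_answers (hls_box R s \<pi>) D (Suc k))} * (card (carrier R) - k^2)
    \<le> card (carrier R) * card {\<pi>. \<pi> permutes carrier R} * k"
    (is "card ?X * _ \<le> _")
proof (rule card_decodable_runs[OF assms, where D = D
      and decode = "\<lambda>t i. hls_slope_through R (fst D (take i t)) (fst D t)"])
  show "?X \<subseteq> carrier R \<times> {\<pi>. \<pi> permutes carrier R}"
    by auto
next
  fix s \<pi> assume "(s, \<pi>) \<in> ?X"
  then show "hls_collision_free R D s (hls_answers (hls_box R s \<pi>) D k)"
    by auto
next
  fix s \<pi> assume "(s, \<pi>) \<in> ?X"
  then have s: "s \<in> carrier R"
    and cf: "hls_collision_free R D s (hls_answers (hls_box R s \<pi>) D k)"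
    and ncf: "\<not> hls_collision_free R D s (hls_answers (hls_box R s \<pi>) D (Suc k))"
    by auto
  define q where "q j = fst D (hls_answers (hls_box R s \<pi>) D j)" for j
  from cf ncf obtain i where i: "i < k" "q i \<in> carrier R \<times> carrier R" "q k \<in> carrier R \<times> carrier R"
    "q i \<noteq> q k" "hls_shear R s (q i) = hls_shear R s (q k)"
    unfolding q_def by (rule hls_first_collision)
  have "hls_slope_through R (q i) (q k) = s"
    by (rule domain.hls_slope_through_eq[OF assms(1) i(2-4) s i(5)])
  with i(1) show "\<exists>i<k. hls_slope_through R (fst D (take i (hls_answers (hls_box R s \<pi>) D k)))
      (fst D (hls_answers (hls_box R s \<pi>) D k)) = s"
    unfolding q_def by (intro exI[of _ i]) simp
qed

lemma card_correct_runs: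
  fixes R :: "nat ring"
  assumes "domain R" "finite (carrier R)"
  shows "card {(s, \<pi>) \<in> carrier R \<times> {\<pi>. \<pi> permutes carrier R}. hls_run (hls_box R s \<pi>) T D = s}
      * (card (carrier R) - T^2) \<le> card (carrier R) * card {\<pi>. \<pi> permutes carrier R} * (1 + T^2)"
proof -
  define Q where "Q = carrier R"
  define P where "P = {\<pi>. \<pi> permutes Q}"
  define q where "q = card Q"
  define N where "N = card P"
  define ans where "ans k s \<pi> = hls_answers (hls_box R s \<pi>) D k" for k s \<pi>
  define S where "S = {(s, \<pi>) \<in> Q \<times> P. hls_run (hls_box R s \<pi>) T D = s}"
  define E where "E = {(s, \<pi>) \<in> Q \<times> P. hls_run (hls_box R s \<pi>) T D = s \<and>
      hls_collision_free R D s (ans T s \<pi>)}"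
  define F where "F k = {(s, \<pi>) \<in> Q \<times> P. hls_collision_free R D s (ans k s \<pi>) \<and>
      \<not> hls_collision_free R D s (ans (Suc k) s \<pi>)}" for k
  have finQP: "finite (Q \<times> P)"
    unfolding Q_def P_def using assms(2) by (simp add: finite_permutations)
  have E: "card E * (q - T^2) \<le> q * N"
    using card_correct_collision_free_runs[OF assms, of T D]
    unfolding E_def q_def N_def Q_def P_def ans_def .
  have F: "card (F k) * (q - k^2) \<le> q * N * k" for k
    using card_first_collision_runs[OF assms, of D k]
    unfolding F_def q_def N_def Q_def P_def ans_def .
  have "S \<subseteq> E \<union> (\<Union>k<T. F k)"
  proof
    fix x assume "x \<in> S"
    then obtain s \<pi> where x: "x = (s, \<pi>)" "(s, \<pi>) \<in> S" by (metis surj_pair)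
    show "x \<in> E \<union> (\<Union>k<T. F k)"
    proof (cases "hls_collision_free R D s (ans T s \<pi>)")
      case True
      with x show ?thesis unfolding S_def E_def by auto
    next
      case False
      moreover have "hls_collision_free R D s (ans 0 s \<pi>)"
        by (simp add: ans_def)
      ultimately obtain k where "k < T" "hls_collision_free R D s (ans k s \<pi>)"
        "\<not> hls_collision_free R D s (ans (Suc k) s \<pi>)"
        using ex_least_nat_less[of "\<lambda>k. \<not> hls_collision_free R D s (ans k s \<pi>)" T] by auto
      with x show ?thesis unfolding F_def S_def by auto
    qed
  qed
  then have "card S \<le> card (E \<union> (\<Union>k<T. F k))"
    by (rule card_mono[rotated]) (auto intro: finite_subset[OF _ finQP] simp: E_def F_def)
  also have "\<dots> \<le> card E + card (\<Union>k<T. F k)"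
    by (rule card_Un_le)
  also have "card (\<Union>k<T. F k) \<le> (\<Sum>k<T. card (F k))"
    by (rule card_UN_le) simp
  finally have "card S \<le> card E + (\<Sum>k<T. card (F k))"
    by simp
  then have "card S * (q - T^2) \<le> card E * (q - T^2) + (\<Sum>k<T. card (F k) * (q - T^2))"
    by (metis add_mult_distrib mult_le_mono1 sum_distrib_right)
  also have "\<dots> \<le> q * N + (\<Sum>k<T. q * N * T)"
  proof (intro add_mono E sum_mono)
    fix k assume "k \<in> {..<T}"
    then have "card (F k) * (q - T^2) \<le> card (F k) * (q - k^2)"
      by (intro mult_le_mono2 diff_le_mono2 power_mono) auto
    also have "\<dots> \<le> q * N * k"
      by (rule F)
    also have "\<dots> \<le> q * N * T"
      using \<open>k \<in> {..<T}\<close> by simp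
    finally show "card (F k) * (q - T^2) \<le> q * N * T" .
  qed
  also have "\<dots> = q * N * (1 + T^2)"
    by (simp add: algebra_simps power2_eq_square)
  finally show ?thesis
    unfolding S_def Q_def P_def q_def N_def .
qed

lemma measure_pmf_averaging:
  fixes A :: "'a pmf" and X :: "'b set"
  assumes "finite X"
    and "\<And>x. x \<in> X \<Longrightarrow> p \<le> measure_pmf.prob A {D. good x D}"
    and "\<And>D. real (card {x \<in> X. good x D}) \<le> B"
  shows "p * real (card X) \<le> B"
proof -
  have "p * real (card X) = (\<Sum>x\<in>X. p)"
    by simp
  also have "\<dots> \<le> (\<Sum>x\<in>X. measure_pmf.expectation A (indicator {D. good x D}))"
    using assms(2) by (intro sum_mono) simp
  also have "\<dots> = measure_pmf.expectation A (\<lambda>D. \<Sum>x\<in>X. indicator {D. good x D} D)"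
    by (rule Bochner_Integration.integral_sum[symmetric])
      (simp add: integrable_indicator_iff less_top[symmetric])
  also have "\<dots> = measure_pmf.expectation A (\<lambda>D. real (card {x \<in> X. good x D}))"
    using assms(1) by (simp add: indicator_def sum.If_cases Int_def conj_commute)
  also have "\<dots> \<le> measure_pmf.expectation A (\<lambda>_. B)"
    using assms(3) by (intro integral_mono) (auto intro: measure_pmf.integrable_const_bound[of _ B])
  also have "\<dots> = B"
    by simp
  finally show ?thesis .
qed

lemma hls_solves_prob_correct:
  assumes "hls_solves R T A" "s \<in> carrier R" "\<pi> permutes carrier R"
  shows "1/2 \<le> measure_pmf.prob A {D. hls_run (hls_box R s \<pi>) T D = s}"
proof -
  have "measure_pmf.prob A {D. hls_run (hls_box R s \<pi>) T D \<noteq> s} \<le> 1/2"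
    using assms permutes_imp_bij unfolding hls_solves_def by blast
  moreover have "{D. hls_run (hls_box R s \<pi>) T D = s} = UNIV - {D. hls_run (hls_box R s \<pi>) T D \<noteq> s}"
    by blast
  ultimately show ?thesis
    using measure_pmf.prob_compl[of "{D. hls_run (hls_box R s \<pi>) T D \<noteq> s}" A] by simp
qed

lemma hls_solves_card_le:
  fixes R :: "nat ring" and A :: "det_alg pmf"
  assumes "field R" "finite (carrier R)" "hls_solves R T A" "T^2 < card (carrier R)"
  shows "card (carrier R) \<le> 2 + 3 * T^2"
proof -
  define Q where "Q = carrier R"
  define P where "P = {\<pi>. \<pi> permutes Q}"
  define q where "q = card Q"
  define N where "N = card P"
  define correct where "correct x D \<longleftrightarrow> hls_run (hls_box R (fst x) (snd x)) T D = fst x" for x D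
  have q_gt: "T^2 < q"
    using assms(4) unfolding q_def Q_def .
  have finP: "finite P"
    unfolding P_def Q_def using assms(2) by (rule finite_permutations)
  have "1/2 * real (card (Q \<times> P)) \<le> real (q * N * (1 + T^2)) / real (q - T^2)"
  proof (rule measure_pmf_averaging[where good = correct])
    show "finite (Q \<times> P)"
      using assms(2) finP by (simp add: Q_def)
  next
    fix x assume "x \<in> Q \<times> P"
    then show "1/2 \<le> measure_pmf.prob A {D. correct x D}"
      unfolding correct_def by (intro hls_solves_prob_correct[OF assms(3)]) (auto simp: Q_def P_def)
  next
    fix D
    have "{x \<in> Q \<times> P. correct x D} =
        {(s, \<pi>) \<in> carrier R \<times> {\<pi>. \<pi> permutes carrier R}. hls_run (hls_box R s \<pi>) T D = s}"
      unfolding correct_def Q_def P_def by (intro Collect_cong) (simp add: split_beta mem_Times_iff)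
    then have "card {x \<in> Q \<times> P. correct x D} * (q - T^2) \<le> q * N * (1 + T^2)"
      using card_correct_runs[OF field.axioms(1)[OF assms(1)] assms(2), of T D]
      by (simp only: q_def N_def Q_def P_def)
    then have "real (card {x \<in> Q \<times> P. correct x D}) * real (q - T^2) \<le> real (q * N * (1 + T^2))"
      by (simp only: of_nat_mult[symmetric] of_nat_le_iff)
    with q_gt show "real (card {x \<in> Q \<times> P. correct x D}) \<le> real (q * N * (1 + T^2)) / real (q - T^2)"
      by (simp add: pos_le_divide_eq)
  qed
  also have "card (Q \<times> P) = q * N"
    by (simp add: q_def N_def card_cartesian_product)
  finally have "real (q * N) * real (q - T^2) \<le> real (q * N) * (2 * (1 + real T ^ 2))"
    using q_gt by (simp add: field_simps)
  moreover have "0 < N"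
  proof -
    have "id \<in> P"
      unfolding P_def by (simp add: permutes_id)
    with finP show ?thesis
      unfolding N_def by (auto simp: card_gt_0_iff)
  qed
  ultimately have "real (q - T^2) \<le> real (2 * (1 + T^2))"
    using q_gt by (simp add: mult_le_cancel_left_pos)
  then have "q \<le> 2 * (1 + T^2) + T^2"
    by (simp only: of_nat_le_iff le_diff_conv)
  then show ?thesis
    unfolding q_def Q_def by (simp add: algebra_simps)
qed

theorem theorem3:
  "\<exists>c::real > 0. \<exists>q0::nat. \<forall>(R::nat ring) (T::nat) (A::det_alg pmf).
     field R \<longrightarrow> finite (carrier R) \<longrightarrow> card (carrier R) \<ge> q0 \<longrightarrow>
     hls_solves R T A \<longrightarrow> c * sqrt (real (card (carrier R))) \<le> real T"
proof (intro exI[of _ "1/2"] conjI exI[of _ 8] allI impI)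
  show "(0::real) < 1/2" by simp
next
  fix R :: "nat ring" and T :: nat and A :: "det_alg pmf"
  assume R: "field R" "finite (carrier R)" "8 \<le> card (carrier R)" and "hls_solves R T A"
  have "card (carrier R) \<le> 4 * T^2"
  proof (cases "T^2 < card (carrier R)")
    case True
    with hls_solves_card_le[OF R(1,2) \<open>hls_solves R T A\<close> True] R(3) show ?thesis
      by linarith
  qed simp
  then have "real (card (carrier R)) \<le> real (4 * T^2)"
    by (simp only: of_nat_le_iff)
  then have "real (card (carrier R)) \<le> (2 * real T)^2"
    by (simp add: power_mult_distrib)
  then have "sqrt (real (card (carrier R))) \<le> 2 * real T"
    by (simp add: real_le_lsqrt)
  then show "1/2 * sqrt (real (card (carrier R))) \<le> real T"
    by simp
qed

end
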